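(* Let $d,n,r\ge1$, $\mathbf r=(r,\dots,r)\in\mathbb{N}^d$, $\theta\ge0$, $0<\varepsilon,\mu<1$ and $R\ge1$. Then the set $\mathcal{B}_{R,\mu,\theta,\mathbf r}$ of $d$-mode tensors in $\mathbb{R}^{n\times\cdots\times n}$ satisfies $$\mathcal{N}(\mathcal{B}_{R,\mu,\theta,\mathbf r},\|\cdot\|_F,\varepsilon)\le\Big(\frac{6(d+1)}{\varepsilon}\Big)^{r^d+rnd}(R^2+\mu r)^{r^dd/2}(R^2+\mu r^d)^{dnr/2}R^{(d-1)dnr}.$$
   Context: For $R\ge0$, $\mu,\theta\ge0$, $\mathcal{B}_{R,\mu,\theta,\mathbf r}$ is the set of $\mathcal{X}\in\mathbb{R}^{n\times\cdots\times n}$ ($d$ modes) that can be written $\mathcal{X}=\sum_{k_1,\dots,k_d=1}^{r}\mathcal{C}(k_1,\dots,k_d)\,\mathbf{u}^1_{k_1}\circ\cdots\circ\mathbf{u}^d_{k_d}$ ($\circ$ outer product, $\mathbf{u}^i_k\in\mathbb{R}^n$) such that (a) $\|\mathbf{u}^i_k\|_2\le R$ for all $i,k$; (b) $|\langle\mathbf{u}^i_k,\mathbf{u}^i_{k'}\rangle|\le\mu$ for all $i$, $k\ne k'$; (c) $\|\mathcal{C}\|_F=1$; (d) for each $i$ and $p\ne q$, $\sum_{k_j,\,j\ne i}\mathcal{C}(k_1,\dots,p,\dots,k_d)\mathcal{C}(k_1,\dots,q,\dots,k_d)=0$ ($p,q$ in position $i$); (e) $\|\mathcal{X}\|_F\ge\theta$.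 $\mathcal{N}(\mathcal{S},\|\cdot\|_F,t)$ is the minimal cardinality of a subset of $\mathcal{S}$ such that every element of $\mathcal{S}$ is within Frobenius distance $t$ of some element of the subset. *)

theory Defs
  imports "HOL-Analysis.Analysis"
begin

text \<open>A d-mode tensor in R^{n x ... x n} is a function on index lists that
  vanishes outside idx d n.\<close>
definition idx :: "nat \<Rightarrow> nat \<Rightarrow> nat list set" where
  "idx d m = {is. length is = d \<and> (\<forall>x\<in>set is. x < m)}"

definition frob :: "nat \<Rightarrow> nat \<Rightarrow> (nat list \<Rightarrow> real) \<Rightarrow> real" where
  "frob d m X = sqrt (\<Sum>is\<in>idx d m. (X is)\<^sup>2)"

definition vnorm :: "nat \<Rightarrow> (nat \<Rightarrow> real) \<Rightarrow> real" where
  "vnorm n v = sqrt (\<Sum>j<n. (v j)\<^sup>2)"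

definition vinner :: "nat \<Rightarrow> (nat \<Rightarrow> real) \<Rightarrow> (nat \<Rightarrow> real) \<Rightarrow> real" where
  "vinner n v w = (\<Sum>j<n. v j * w j)"

text \<open>Tucker-type tensor sum_{k} C(k_1..k_d) u^1_{k_1} o ... o u^d_{k_d};
  u i k is the vector u^{i+1}_{k+1}.\<close>
definition tucker :: "nat \<Rightarrow> nat \<Rightarrow> nat \<Rightarrow> (nat list \<Rightarrow> real) \<Rightarrow> (nat \<Rightarrow> nat \<Rightarrow> nat \<Rightarrow> real)
    \<Rightarrow> nat list \<Rightarrow> real" where
  "tucker d n r C u = (\<lambda>is. if is \<in> idx d n then
      (\<Sum>ks\<in>idx d r. C ks * (\<Prod>i<d. u i (ks ! i) (is ! i))) else 0)"

definition Bset :: "nat \<Rightarrow> nat \<Rightarrow> nat \<Rightarrow> real \<Rightarrow> real \<Rightarrow> real \<Rightarrow> (nat list \<Rightarrow> real) set" where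
  "Bset d n r R \<mu> \<theta> = {X. \<exists>C u. X = tucker d n r C u
      \<and> (\<forall>i<d. \<forall>k<r. vnorm n (u i k) \<le> R)
      \<and> (\<forall>i<d. \<forall>k<r. \<forall>k'<r. k \<noteq> k' \<longrightarrow> \<bar>vinner n (u i k) (u i k')\<bar> \<le> \<mu>)
      \<and> frob d r C = 1
      \<and> (\<forall>i<d. \<forall>p<r. \<forall>q<r. p \<noteq> q \<longrightarrow>
           (\<Sum>ks\<in>{ks\<in>idx d r. ks ! i = p}. C ks * C (ks[i := q])) = 0)
      \<and> frob d n X \<ge> \<theta>}"

text \<open>Covering number (internal: centres from S), in ereal; infinity if no finite cover.\<close>
definition covnum :: "nat \<Rightarrow> nat \<Rightarrow> (nat list \<Rightarrow> real) set \<Rightarrow> real \<Rightarrow> ereal" where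
  "covnum d n S t = (INF N \<in> {N. finite N \<and> N \<subseteq> S \<and>
       (\<forall>X\<in>S. \<exists>Y\<in>N. frob d n (\<lambda>is. X is - Y is) \<le> t)}. ereal (real (card N)))"

end

theory Submission
  imports Defs
begin

text \<open>Every X in the set is a Tucker tensor whose core C has unit Frobenius norm and mode
  unfoldings with orthogonal rows, and whose factor matrices have columns of norm at most R with
  pairwise inner products at most \<mu>; such a factor matrix has operator norm at most
  L = sqrt (R^2 + \<mu> (r - 1)). Replacing the core by C' moves X by at most L^d |C - C'|.
  Replacing the factors one mode at a time, the orthogonality of the unfoldings of the core bounds
  the move in mode i by L^(d-1) times the largest column norm of the difference of the two factors.
  Hence internal nets of the cores and, columnwise, of the factor matrices, of the volumetric sizes
  (1 + 2 L^d / \<eta>)^(r^d) and (1 + 2 R L^(d-1) / \<eta>)^(r n), give an external (d + 1) \<eta>-net of the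
  set and thus an internal 2 (d + 1) \<eta>-net. The stated bound follows from
  R L^(d-1) \<le> R^(d-1) sqrt (R^2 + \<mu> r^d).\<close>

section \<open>Multilinear products and their Frobenius norms\<close>

lemma idx_0: "idx 0 m = {[]}"
  by (auto simp: idx_def)

lemma idx_Suc: "idx (Suc d) m = (\<lambda>(k, ks). k # ks) ` ({..<m} \<times> idx d m)"
proof (rule set_eqI)
  fix xs
  show "xs \<in> idx (Suc d) m \<longleftrightarrow> xs \<in> (\<lambda>(k, ks). k # ks) ` ({..<m} \<times> idx d m)"
    by (cases xs) (auto simp: idx_def image_iff)
qed

lemma finite_idx [simp]: "finite (idx d m)"
  by (induction d) (auto simp: idx_0 idx_Suc)

lemma inj_on_Cons_pair: "inj_on (\<lambda>(k, ks). k # ks) A"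
  by (auto simp: inj_on_def)

lemma card_idx: "card (idx d m) = m ^ d"
  by (induction d) (simp_all add: idx_0 idx_Suc card_image[OF inj_on_Cons_pair] card_cartesian_product)

lemma sum_idx_Suc: "(\<Sum>xs\<in>idx (Suc d) m. f xs) = (\<Sum>k<m. \<Sum>ks\<in>idx d m. f (k # ks))"
  unfolding idx_Suc sum.reindex[OF inj_on_Cons_pair] by (simp add: sum.cartesian_product case_prod_beta)

lemma sum_idx_Suc_filter:
  "(\<Sum>ks\<in>{ks\<in>idx (Suc d) r. P ks}. f ks) = (\<Sum>k<r. \<Sum>ks\<in>{ks\<in>idx d r. P (k # ks)}. f (k # ks))"
  by (simp add: sum.inter_filter sum_idx_Suc)

definition frob_sq :: "nat \<Rightarrow> nat \<Rightarrow> (nat list \<Rightarrow> real) \<Rightarrow> real" where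
  "frob_sq d m X = (\<Sum>is\<in>idx d m. (X is)\<^sup>2)"

lemma frob_eq_sqrt_frob_sq: "frob d m X = sqrt (frob_sq d m X)"
  by (simp add: frob_def frob_sq_def)

lemma frob_eq_L2_set: "frob d m X = L2_set X (idx d m)"
  by (simp add: frob_def L2_set_def)

lemma frob_sq_Suc: "frob_sq (Suc d) m X = (\<Sum>k<m. frob_sq d m (\<lambda>ks. X (k # ks)))"
  by (simp add: frob_sq_def sum_idx_Suc)

lemma frob_triangle:
  "frob d m (\<lambda>is. X is - Z is) \<le> frob d m (\<lambda>is. X is - Y is) + frob d m (\<lambda>is. Y is - Z is)"
  unfolding frob_eq_L2_set using L2_set_triangle_ineq[of "\<lambda>is. X is - Y is" "\<lambda>is. Y is - Z is"]
  by simp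

lemma frob_diff_commute: "frob d m (\<lambda>is. X is - Y is) = frob d m (\<lambda>is. Y is - X is)"
  by (simp add: frob_def power2_commute)

definition mode_mult :: "nat \<Rightarrow> nat \<Rightarrow> (nat list \<Rightarrow> real) \<Rightarrow> (nat \<Rightarrow> nat \<Rightarrow> nat \<Rightarrow> real) \<Rightarrow> nat list \<Rightarrow> real" where
  "mode_mult d r X U is = (\<Sum>ks\<in>idx d r. X ks * (\<Prod>j<d. U j (ks ! j) (is ! j)))"

lemma tucker_eq_mode_mult: "is \<in> idx d n \<Longrightarrow> tucker d n r C U is = mode_mult d r C U is"
  by (simp add: tucker_def mode_mult_def)

lemma mode_mult_Cons:
  "mode_mult (Suc d) r X U (a # is) = (\<Sum>k<r. U 0 k a * mode_mult d r (\<lambda>ks. X (k # ks)) (\<lambda>j. U (Suc j)) is)"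
  unfolding mode_mult_def sum_idx_Suc prod.lessThan_Suc_shift by (simp add: sum_distrib_left mult_ac)

lemma mode_mult_sum_core:
  "finite S \<Longrightarrow> (\<Sum>k\<in>S. c k * mode_mult d r (X k) U is) = mode_mult d r (\<lambda>ks. \<Sum>k\<in>S. c k * X k ks) U is"
  by (simp add: mode_mult_def sum_distrib_left sum_distrib_right sum.swap[of _ S] mult_ac)

lemma mode_mult_cong: "(\<And>j. j < d \<Longrightarrow> U j = V j) \<Longrightarrow> mode_mult d r X U is = mode_mult d r X V is"
  unfolding mode_mult_def by (intro sum.cong refl arg_cong2[where f="(*)"] prod.cong) auto

lemma mode_mult_diff_core:
  "mode_mult d r C U is - mode_mult d r C' U is = mode_mult d r (\<lambda>ks. C ks - C' ks) U is"
  by (simp add: mode_mult_def sum_subtractf left_diff_distrib)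

lemma mode_mult_diff_mode:
  assumes i: "i < d" and eq: "\<And>j. j < d \<Longrightarrow> j \<noteq> i \<Longrightarrow> U j = V j"
  shows "mode_mult d r X U is - mode_mult d r X V is = mode_mult d r X (U(i := (\<lambda>k a. U i k a - V i k a))) is"
proof -
  have "(\<Prod>j<d. U j (ks ! j) (is ! j)) - (\<Prod>j<d. V j (ks ! j) (is ! j))
      = (\<Prod>j<d. (U(i := (\<lambda>k a. U i k a - V i k a))) j (ks ! j) (is ! j))" for ks
  proof -
    define P where "P = (\<Prod>j\<in>{..<d}-{i}. U j (ks ! j) (is ! j))"
    have "(\<Prod>j<d. U j (ks ! j) (is ! j)) = U i (ks ! i) (is ! i) * P"
      unfolding P_def using i by (subst prod.remove[of _ i]) auto
    moreover have "(\<Prod>j<d. V j (ks ! j) (is ! j)) = V i (ks ! i) (is ! i) * P"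
      unfolding P_def using i eq by (subst prod.remove[of _ i]) (auto intro!: prod.cong)
    moreover have "(\<Prod>j<d. (U(i := (\<lambda>k a. U i k a - V i k a))) j (ks ! j) (is ! j))
        = (U i (ks ! i) (is ! i) - V i (ks ! i) (is ! i)) * P"
      unfolding P_def using i by (subst prod.remove[of _ i]) (auto intro!: prod.cong)
    ultimately show ?thesis by (simp add: algebra_simps)
  qed
  then show ?thesis by (simp add: mode_mult_def right_diff_distrib[symmetric] sum_subtractf[symmetric])
qed

definition hybrid_factors ::
    "(nat \<Rightarrow> nat \<Rightarrow> nat \<Rightarrow> real) \<Rightarrow> (nat \<Rightarrow> nat \<Rightarrow> nat \<Rightarrow> real) \<Rightarrow> nat \<Rightarrow> nat \<Rightarrow> nat \<Rightarrow> nat \<Rightarrow> real" where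
  "hybrid_factors U V i = (\<lambda>j. if j < i then V j else U j)(i := (\<lambda>k a. U i k a - V i k a))"

lemma mode_mult_diff_telescope:
  "mode_mult d r X U is - mode_mult d r X V is = (\<Sum>i<d. mode_mult d r X (hybrid_factors U V i) is)"
proof -
  define W where "W i = (\<lambda>j. if j < i then V j else U j)" for i :: nat
  have "mode_mult d r X (W i) is - mode_mult d r X (W (Suc i)) is
      = mode_mult d r X (hybrid_factors U V i) is" if "i < d" for i
    using mode_mult_diff_mode[OF that, of "W i" "W (Suc i)"]
    by (simp add: W_def hybrid_factors_def cong: if_cong)
  then have "(\<Sum>i<d. mode_mult d r X (hybrid_factors U V i) is)
      = (\<Sum>i<d. mode_mult d r X (W i) is - mode_mult d r X (W (Suc i)) is)"
    by simp
  also have "\<dots> = mode_mult d r X (W 0) is - mode_mult d r X (W d) is"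
    by (rule sum_lessThan_telescope')
  also have "mode_mult d r X (W d) is = mode_mult d r X V is"
    by (rule mode_mult_cong) (simp add: W_def)
  finally show ?thesis by (simp add: W_def)
qed

definition op_norm_le :: "nat \<Rightarrow> nat \<Rightarrow> (nat \<Rightarrow> nat \<Rightarrow> real) \<Rightarrow> real \<Rightarrow> bool" where
  "op_norm_le n r U l \<longleftrightarrow> (\<forall>y. (\<Sum>a<n. (\<Sum>k<r. y k * U k a)\<^sup>2) \<le> l\<^sup>2 * (\<Sum>k<r. (y k)\<^sup>2))"

text \<open>The Gram matrix of the rows of the mode-i unfolding of X; condition (d) of the core says
  that it is diagonal.\<close>
definition unfolding_gram :: "nat \<Rightarrow> nat \<Rightarrow> (nat list \<Rightarrow> real) \<Rightarrow> nat \<Rightarrow> nat \<Rightarrow> nat \<Rightarrow> real" where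
  "unfolding_gram d r X i p q = (\<Sum>ks\<in>{ks\<in>idx d r. ks ! i = p}. X ks * X (ks[i := q]))"

lemma unfolding_gram_Suc_0:
  assumes "p < r"
  shows "unfolding_gram (Suc d) r X 0 p q = (\<Sum>ks\<in>idx d r. X (p # ks) * X (q # ks))"
proof -
  have "unfolding_gram (Suc d) r X 0 p q
      = (\<Sum>k<r. if k = p then (\<Sum>ks\<in>idx d r. X (k # ks) * X (q # ks)) else 0)"
    unfolding unfolding_gram_def sum_idx_Suc_filter by (intro sum.cong) auto
  then show ?thesis
    using assms by simp
qed

lemma unfolding_gram_Suc_Suc:
  "unfolding_gram (Suc d) r X (Suc i) p q = (\<Sum>k<r. unfolding_gram d r (\<lambda>ks. X (k # ks)) i p q)"
  unfolding unfolding_gram_def sum_idx_Suc_filter by simp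

lemma unfolding_gram_diag: "unfolding_gram d r X i k k = (\<Sum>ks\<in>{ks\<in>idx d r. ks ! i = k}. (X ks)\<^sup>2)"
  unfolding unfolding_gram_def by (intro sum.cong refl) (auto simp: power2_eq_square)

lemma unfolding_gram_diag_nonneg: "unfolding_gram d r X i k k \<ge> 0"
  by (simp add: unfolding_gram_diag sum_nonneg)

lemma sum_unfolding_gram_diag:
  assumes "i < d"
  shows "(\<Sum>k<r. unfolding_gram d r X i k k) = frob_sq d r X"
proof -
  have "(\<lambda>ks. ks ! i) ` idx d r \<subseteq> {..<r}"
    using assms by (auto simp: idx_def)
  then show ?thesis
    unfolding unfolding_gram_diag frob_sq_def by (intro sum.group) auto
qed

lemma sum_squares_linear_combination:
  "(\<Sum>a<n. (\<Sum>k<r. y k * U k a)\<^sup>2) = (\<Sum>k<r. \<Sum>k'<r. vinner n (U k) (U k') * (y k * y k'))"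
  by (simp add: vinner_def power2_eq_square sum_product sum_distrib_left sum_distrib_right mult_ac
      sum.swap[of _ "{..<n}"])

lemma frob_sq_mode_mult_Suc_le:
  assumes "op_norm_le n r (U 0) l"
  shows "frob_sq (Suc d) n (mode_mult (Suc d) r X U)
    \<le> l\<^sup>2 * (\<Sum>k<r. frob_sq d n (mode_mult d r (\<lambda>ks. X (k # ks)) (\<lambda>j. U (Suc j))))"
proof -
  define W where "W k = mode_mult d r (\<lambda>ks. X (k # ks)) (\<lambda>j. U (Suc j))" for k
  have "frob_sq (Suc d) n (mode_mult (Suc d) r X U) = (\<Sum>is\<in>idx d n. \<Sum>a<n. (\<Sum>k<r. W k is * U 0 k a)\<^sup>2)"
    by (simp add: frob_sq_def sum_idx_Suc mode_mult_Cons W_def mult.commute sum.swap[of _ "{..<n}"])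
  also have "\<dots> \<le> (\<Sum>is\<in>idx d n. l\<^sup>2 * (\<Sum>k<r. (W k is)\<^sup>2))"
    using assms by (intro sum_mono) (simp add: op_norm_le_def)
  also have "\<dots> = l\<^sup>2 * (\<Sum>k<r. frob_sq d n (W k))"
    by (simp add: frob_sq_def sum_distrib_left sum.swap[of _ "idx d n"])
  finally show ?thesis
    by (simp add: W_def)
qed

lemma frob_sq_mode_mult_le:
  assumes "\<And>j. j < d \<Longrightarrow> op_norm_le n r (U j) (l j)"
  shows "frob_sq d n (mode_mult d r X U) \<le> (\<Prod>j<d. (l j)\<^sup>2) * frob_sq d r X"
  using assms
proof (induction d arbitrary: X U l)
  case 0
  then show ?case
    by (simp add: frob_sq_def mode_mult_def idx_0)
next
  case (Suc d)
  have IH: "frob_sq d n (mode_mult d r (\<lambda>ks. X (k # ks)) (\<lambda>j. U (Suc j)))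
      \<le> (\<Prod>j<d. (l (Suc j))\<^sup>2) * frob_sq d r (\<lambda>ks. X (k # ks))" for k
    using Suc.prems by (intro Suc.IH) auto
  have "frob_sq (Suc d) n (mode_mult (Suc d) r X U)
      \<le> (l 0)\<^sup>2 * (\<Sum>k<r. frob_sq d n (mode_mult d r (\<lambda>ks. X (k # ks)) (\<lambda>j. U (Suc j))))"
    using Suc.prems by (intro frob_sq_mode_mult_Suc_le) auto
  also have "\<dots> \<le> (l 0)\<^sup>2 * (\<Sum>k<r. (\<Prod>j<d. (l (Suc j))\<^sup>2) * frob_sq d r (\<lambda>ks. X (k # ks)))"
    by (intro mult_left_mono sum_mono IH) auto
  also have "\<dots> = (\<Prod>j<Suc d. (l j)\<^sup>2) * frob_sq (Suc d) r X"
    by (simp only: frob_sq_Suc prod.lessThan_Suc_shift sum_distrib_left mult_ac)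
  finally show ?case .
qed

lemma frob_sq_mode_mult_le_gram_first:
  assumes "\<And>j. j < d \<Longrightarrow> op_norm_le n r (U (Suc j)) (l j)"
  shows "frob_sq (Suc d) n (mode_mult (Suc d) r X U)
    \<le> (\<Prod>j<d. (l j)\<^sup>2) * (\<Sum>k<r. \<Sum>k'<r. vinner n (U 0 k) (U 0 k') * unfolding_gram (Suc d) r X 0 k k')"
proof -
  define Z where "Z a ks = (\<Sum>k<r. U 0 k a * X (k # ks))" for a ks
  have "mode_mult (Suc d) r X U (a # is) = mode_mult d r (Z a) (\<lambda>j. U (Suc j)) is" for a "is"
    unfolding mode_mult_Cons mode_mult_sum_core[OF finite_lessThan] Z_def ..
  then have "frob_sq (Suc d) n (mode_mult (Suc d) r X U) = (\<Sum>a<n. frob_sq d n (mode_mult d r (Z a) (\<lambda>j. U (Suc j))))"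
    by (simp add: frob_sq_Suc)
  also have "\<dots> \<le> (\<Sum>a<n. (\<Prod>j<d. (l j)\<^sup>2) * frob_sq d r (Z a))"
    using assms by (intro sum_mono frob_sq_mode_mult_le) auto
  also have "\<dots> = (\<Prod>j<d. (l j)\<^sup>2) * (\<Sum>ks\<in>idx d r. \<Sum>a<n. (\<Sum>k<r. X (k # ks) * U 0 k a)\<^sup>2)"
    by (simp add: frob_sq_def Z_def sum_distrib_left mult.commute sum.swap[of _ "{..<n}"])
  also have "(\<Sum>ks\<in>idx d r. \<Sum>a<n. (\<Sum>k<r. X (k # ks) * U 0 k a)\<^sup>2)
      = (\<Sum>k<r. \<Sum>k'<r. vinner n (U 0 k) (U 0 k') * unfolding_gram (Suc d) r X 0 k k')"
    by (simp add: sum_squares_linear_combination unfolding_gram_Suc_0 sum_distrib_left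
        sum.swap[of _ "idx d r"])
  finally show ?thesis .
qed

lemma frob_sq_mode_mult_le_gram:
  assumes "i < d" "\<And>j. j < d \<Longrightarrow> j \<noteq> i \<Longrightarrow> op_norm_le n r (U j) (l j)"
  shows "frob_sq d n (mode_mult d r X U)
    \<le> (\<Prod>j\<in>{..<d}-{i}. (l j)\<^sup>2) * (\<Sum>k<r. \<Sum>k'<r. vinner n (U i k) (U i k') * unfolding_gram d r X i k k')"
  using assms
proof (induction d arbitrary: i X U l)
  case 0
  then show ?case by simp
next
  case (Suc d)
  show ?case
  proof (cases i)
    case 0
    have "{..<Suc d} - {0} = Suc ` {..<d}"
      using lessThan_Suc_eq_insert_0[of d] by auto
    then have "(\<Prod>j\<in>{..<Suc d}-{0}. (l j)\<^sup>2) = (\<Prod>j<d. (l (Suc j))\<^sup>2)"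
      by (simp add: prod.reindex)
    moreover have "frob_sq (Suc d) n (mode_mult (Suc d) r X U)
        \<le> (\<Prod>j<d. (l (Suc j))\<^sup>2) * (\<Sum>k<r. \<Sum>k'<r. vinner n (U 0 k) (U 0 k') * unfolding_gram (Suc d) r X 0 k k')"
      using Suc.prems 0 by (intro frob_sq_mode_mult_le_gram_first) auto
    ultimately show ?thesis
      using 0 by simp
  next
    case (Suc i')
    define P where "P = (\<Prod>j\<in>{..<d}-{i'}. (l (Suc j))\<^sup>2)"
    define G where "G k k' = vinner n (U i k) (U i k')" for k k'
    have "{..<Suc d} - {Suc i'} = insert 0 (Suc ` ({..<d} - {i'}))"
      using lessThan_Suc_eq_insert_0[of d] by auto
    then have prod_eq: "(\<Prod>j\<in>{..<Suc d}-{i}. (l j)\<^sup>2) = (l 0)\<^sup>2 * P"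
      by (simp add: Suc P_def prod.reindex)
    have IH: "frob_sq d n (mode_mult d r (\<lambda>ks. X (k # ks)) (\<lambda>j. U (Suc j)))
        \<le> P * (\<Sum>p<r. \<Sum>q<r. G p q * unfolding_gram d r (\<lambda>ks. X (k # ks)) i' p q)" for k
      unfolding P_def G_def Suc using Suc.prems Suc by (intro Suc.IH) auto
    have "frob_sq (Suc d) n (mode_mult (Suc d) r X U)
        \<le> (l 0)\<^sup>2 * (\<Sum>k<r. frob_sq d n (mode_mult d r (\<lambda>ks. X (k # ks)) (\<lambda>j. U (Suc j))))"
      using Suc.prems Suc by (intro frob_sq_mode_mult_Suc_le) auto
    also have "\<dots> \<le> (l 0)\<^sup>2 * (\<Sum>k<r. P * (\<Sum>p<r. \<Sum>q<r. G p q * unfolding_gram d r (\<lambda>ks. X (k # ks)) i' p q))"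
      by (intro mult_left_mono sum_mono IH) auto
    also have "(\<Sum>k<r. P * (\<Sum>p<r. \<Sum>q<r. G p q * unfolding_gram d r (\<lambda>ks. X (k # ks)) i' p q))
        = P * (\<Sum>p<r. \<Sum>k<r. \<Sum>q<r. G p q * unfolding_gram d r (\<lambda>ks. X (k # ks)) i' p q)"
      by (simp only: sum_distrib_left[symmetric]) (rule arg_cong[OF sum.swap])
    also have "\<dots> = P * (\<Sum>p<r. \<Sum>q<r. \<Sum>k<r. G p q * unfolding_gram d r (\<lambda>ks. X (k # ks)) i' p q)"
      by (intro arg_cong[where f="(*) P"] sum.cong refl sum.swap)
    also have "\<dots> = P * (\<Sum>p<r. \<Sum>q<r. G p q * unfolding_gram (Suc d) r X i p q)"
      by (simp only: Suc unfolding_gram_Suc_Suc sum_distrib_left)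
    finally show ?thesis
      by (simp add: prod_eq G_def mult.assoc)
  qed
qed

lemma vinner_self: "vinner n v v = (vnorm n v)\<^sup>2"
  by (simp add: vinner_def vnorm_def power2_eq_square sum_nonneg)

lemma op_norm_le_incoherent:
  assumes norm: "\<And>k. k < r \<Longrightarrow> vnorm n (U k) \<le> R"
    and incoh: "\<And>k k'. k < r \<Longrightarrow> k' < r \<Longrightarrow> k \<noteq> k' \<Longrightarrow> \<bar>vinner n (U k) (U k')\<bar> \<le> \<mu>"
    and "\<mu> \<ge> 0" "r \<ge> 1"
  shows "op_norm_le n r U (sqrt (R\<^sup>2 + \<mu> * (real r - 1)))"
  unfolding op_norm_le_def
proof
  fix y :: "nat \<Rightarrow> real"
  have "0 \<le> R\<^sup>2 + \<mu> * (real r - 1)"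
    using assms(3,4) by (simp add: add_nonneg_nonneg)
  have entry: "vinner n (U k) (U k') * (y k * y k')
      \<le> \<mu> * (\<bar>y k\<bar> * \<bar>y k'\<bar>) + (if k = k' then (R\<^sup>2 - \<mu>) * (y k)\<^sup>2 else 0)"
    if "k < r" "k' < r" for k k'
  proof (cases "k = k'")
    case True
    have "(vnorm n (U k))\<^sup>2 \<le> R\<^sup>2"
      using norm[OF that(1)] by (intro power_mono) (auto simp: vnorm_def sum_nonneg)
    then have "(vnorm n (U k))\<^sup>2 * (y k)\<^sup>2 \<le> R\<^sup>2 * (y k)\<^sup>2"
      by (rule mult_right_mono) simp
    then show ?thesis
      using True by (simp add: vinner_self power2_eq_square algebra_simps)
  next
    case False
    have "vinner n (U k) (U k') * (y k * y k') \<le> \<bar>vinner n (U k) (U k')\<bar> * (\<bar>y k\<bar> * \<bar>y k'\<bar>)"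
      by (metis abs_ge_self abs_mult)
    also have "\<dots> \<le> \<mu> * (\<bar>y k\<bar> * \<bar>y k'\<bar>)"
      using incoh[OF that False] by (intro mult_right_mono) auto
    finally show ?thesis
      using False by simp
  qed
  have "(\<Sum>a<n. (\<Sum>k<r. y k * U k a)\<^sup>2) = (\<Sum>k<r. \<Sum>k'<r. vinner n (U k) (U k') * (y k * y k'))"
    by (rule sum_squares_linear_combination)
  also have "\<dots> \<le> (\<Sum>k<r. \<Sum>k'<r. \<mu> * (\<bar>y k\<bar> * \<bar>y k'\<bar>) + (if k = k' then (R\<^sup>2 - \<mu>) * (y k)\<^sup>2 else 0))"
    using entry by (intro sum_mono) auto
  also have "\<dots> = \<mu> * (\<Sum>k<r. \<bar>y k\<bar>)\<^sup>2 + (R\<^sup>2 - \<mu>) * (\<Sum>k<r. (y k)\<^sup>2)"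
    by (simp add: sum.distrib sum_distrib_left power2_eq_square sum_product mult.commute)
  also have "\<dots> \<le> \<mu> * ((\<Sum>k<r. (y k)\<^sup>2) * real r) + (R\<^sup>2 - \<mu>) * (\<Sum>k<r. (y k)\<^sup>2)"
    using sum_squared_le_sum_of_squares[of "\<lambda>k. \<bar>y k\<bar>" "{..<r}"] \<open>\<mu> \<ge> 0\<close>
    by (intro add_right_mono mult_left_mono) auto
  also have "\<dots> = (sqrt (R\<^sup>2 + \<mu> * (real r - 1)))\<^sup>2 * (\<Sum>k<r. (y k)\<^sup>2)"
    by (simp only: real_sqrt_pow2[OF \<open>0 \<le> R\<^sup>2 + \<mu> * (real r - 1)\<close>]) (simp add: algebra_simps)
  finally show "(\<Sum>a<n. (\<Sum>k<r. y k * U k a)\<^sup>2) \<le> (sqrt (R\<^sup>2 + \<mu> * (real r - 1)))\<^sup>2 * (\<Sum>k<r. (y k)\<^sup>2)" .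
qed

lemma L2_set_sum_le:
  assumes "finite S"
  shows "L2_set (\<lambda>x. \<Sum>i\<in>S. f i x) T \<le> (\<Sum>i\<in>S. L2_set (f i) T)"
  using assms
proof (induction S)
  case empty
  then show ?case by (simp add: L2_set_def)
next
  case (insert a S)
  then have "L2_set (\<lambda>x. \<Sum>i\<in>insert a S. f i x) T = L2_set (\<lambda>x. f a x + (\<Sum>i\<in>S. f i x)) T"
    by simp
  also have "\<dots> \<le> L2_set (f a) T + L2_set (\<lambda>x. \<Sum>i\<in>S. f i x) T"
    by (rule L2_set_triangle_ineq)
  also have "\<dots> \<le> L2_set (f a) T + (\<Sum>i\<in>S. L2_set (f i) T)"
    using insert by simp
  finally show ?case
    using insert by simp
qed

lemma frob_mode_mult_le:
  assumes "L \<ge> 0" "\<And>j. j < d \<Longrightarrow> op_norm_le n r (U j) L"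
  shows "frob d n (mode_mult d r X U) \<le> L ^ d * frob d r X"
proof -
  have "frob_sq d n (mode_mult d r X U) \<le> (L ^ d)\<^sup>2 * frob_sq d r X"
    using frob_sq_mode_mult_le[of d n r U "\<lambda>_. L" X] assms(2)
    by (simp add: power_mult_distrib[symmetric] power_mult[symmetric] mult.commute)
  then have "sqrt (frob_sq d n (mode_mult d r X U)) \<le> sqrt ((L ^ d)\<^sup>2 * frob_sq d r X)"
    by (rule real_sqrt_le_mono)
  then show ?thesis
    using assms(1) by (simp add: frob_eq_sqrt_frob_sq real_sqrt_mult)
qed

text \<open>Orthogonality of the core unfoldings is what reduces the Gram bound to the column norms of
  the one perturbed factor.\<close>
lemma frob_mode_mult_orthogonal_core_le:
  assumes "i < d" "L \<ge> 0" "\<delta> \<ge> 0"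
    and ops: "\<And>j. j < d \<Longrightarrow> j \<noteq> i \<Longrightarrow> op_norm_le n r (U j) L"
    and cols: "\<And>k. k < r \<Longrightarrow> vnorm n (U i k) \<le> \<delta>"
    and unit: "frob_sq d r C = 1"
    and orth: "\<And>p q. p < r \<Longrightarrow> q < r \<Longrightarrow> p \<noteq> q \<Longrightarrow> unfolding_gram d r C i p q = 0"
  shows "frob d n (mode_mult d r C U) \<le> L ^ (d - 1) * \<delta>"
proof -
  have "(\<Prod>j\<in>{..<d}-{i}. L\<^sup>2) = (L ^ (d - 1))\<^sup>2"
    using assms(1) by (simp add: power_mult[symmetric] power_mult_distrib[symmetric] mult.commute)
  then have "frob_sq d n (mode_mult d r C U)
      \<le> (L ^ (d - 1))\<^sup>2 * (\<Sum>k<r. \<Sum>k'<r. vinner n (U i k) (U i k') * unfolding_gram d r C i k k')"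
    using frob_sq_mode_mult_le_gram[OF assms(1) ops] by simp
  also have "(\<Sum>k<r. \<Sum>k'<r. vinner n (U i k) (U i k') * unfolding_gram d r C i k k')
      = (\<Sum>k<r. (vnorm n (U i k))\<^sup>2 * unfolding_gram d r C i k k)"
  proof (intro sum.cong refl)
    fix k assume "k \<in> {..<r}"
    then have "(\<Sum>k'<r. vinner n (U i k) (U i k') * unfolding_gram d r C i k k')
        = (\<Sum>k'<r. if k' = k then vinner n (U i k) (U i k) * unfolding_gram d r C i k k else 0)"
      using orth by (intro sum.cong) auto
    then show "(\<Sum>k'<r. vinner n (U i k) (U i k') * unfolding_gram d r C i k k')
        = (vnorm n (U i k))\<^sup>2 * unfolding_gram d r C i k k"
      using \<open>k \<in> {..<r}\<close> by (simp add: vinner_self)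
  qed
  also have "\<dots> \<le> (\<Sum>k<r. \<delta>\<^sup>2 * unfolding_gram d r C i k k)"
    using cols by (intro sum_mono mult_right_mono power_mono unfolding_gram_diag_nonneg)
      (auto simp: vnorm_def sum_nonneg)
  also have "\<dots> = \<delta>\<^sup>2"
    using sum_unfolding_gram_diag[OF assms(1)] unit by (simp add: sum_distrib_left[symmetric])
  finally have "sqrt (frob_sq d n (mode_mult d r C U)) \<le> sqrt ((L ^ (d - 1) * \<delta>)\<^sup>2)"
    by (simp add: mult_left_mono power_mult_distrib)
  then show ?thesis
    using assms(2,3) by (simp add: frob_eq_sqrt_frob_sq)
qed

lemma frob_mode_mult_perturbation:
  assumes "L \<ge> 0" "\<delta> \<ge> 0"
    and opU: "\<And>j. j < d \<Longrightarrow> op_norm_le n r (U j) L"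
    and opV: "\<And>j. j < d \<Longrightarrow> op_norm_le n r (V j) L"
    and unit: "frob_sq d r C' = 1"
    and orth: "\<And>i p q. i < d \<Longrightarrow> p < r \<Longrightarrow> q < r \<Longrightarrow> p \<noteq> q \<Longrightarrow> unfolding_gram d r C' i p q = 0"
    and core: "frob d r (\<lambda>ks. C ks - C' ks) \<le> \<delta>\<^sub>0"
    and cols: "\<And>i k. i < d \<Longrightarrow> k < r \<Longrightarrow> vnorm n (\<lambda>a. U i k a - V i k a) \<le> \<delta>"
  shows "frob d n (\<lambda>is. mode_mult d r C U is - mode_mult d r C' V is) \<le> L ^ d * \<delta>\<^sub>0 + real d * (L ^ (d - 1) * \<delta>)"
proof -
  have split: "mode_mult d r C U is - mode_mult d r C' V is
      = mode_mult d r (\<lambda>ks. C ks - C' ks) U is + (\<Sum>i<d. mode_mult d r C' (hybrid_factors U V i) is)" for "is"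
    using mode_mult_diff_core[of d r C U "is" C'] mode_mult_diff_telescope[of d r C' U "is" V] by simp
  have hybrid: "frob d n (mode_mult d r C' (hybrid_factors U V i)) \<le> L ^ (d - 1) * \<delta>" if "i < d" for i
    using that assms(1,2) unit orth cols
    by (intro frob_mode_mult_orthogonal_core_le) (auto simp: hybrid_factors_def opU opV)
  have "frob d n (\<lambda>is. mode_mult d r C U is - mode_mult d r C' V is)
      \<le> frob d n (mode_mult d r (\<lambda>ks. C ks - C' ks) U) + frob d n (\<lambda>is. \<Sum>i<d. mode_mult d r C' (hybrid_factors U V i) is)"
    unfolding split frob_eq_L2_set by (rule L2_set_triangle_ineq)
  also have "\<dots> \<le> L ^ d * frob d r (\<lambda>ks. C ks - C' ks) + (\<Sum>i<d. frob d n (mode_mult d r C' (hybrid_factors U V i)))"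
    unfolding frob_eq_L2_set
    by (intro add_mono L2_set_sum_le frob_mode_mult_le[unfolded frob_eq_L2_set] assms(1) opU) auto
  also have "\<dots> \<le> L ^ d * \<delta>\<^sub>0 + (\<Sum>i<d. L ^ (d - 1) * \<delta>)"
    using assms(1) core hybrid by (intro add_mono mult_left_mono sum_mono) auto
  finally show ?thesis
    by simp
qed

section \<open>Volumetric nets for block Euclidean norms\<close>

definition L2_dist :: "'a set \<Rightarrow> ('a \<Rightarrow> real) \<Rightarrow> ('a \<Rightarrow> real) \<Rightarrow> real" where
  "L2_dist b x y = L2_set (\<lambda>j. x j - y j) b"

lemma L2_dist_commute: "L2_dist b x y = L2_dist b y x"
  unfolding L2_dist_def L2_set_def by (simp add: power2_commute)

lemma L2_dist_triangle: "L2_dist b x y \<le> L2_dist b x z + L2_dist b z y"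
  unfolding L2_dist_def using L2_set_triangle_ineq[of "\<lambda>j. x j - z j" "\<lambda>j. z j - y j" b] by simp

lemma L2_dist_self: "L2_dist b x x = 0"
  by (simp add: L2_dist_def L2_set_def)

definition block_ball :: "'a set \<Rightarrow> 'a set set \<Rightarrow> ('a \<Rightarrow> real) \<Rightarrow> real \<Rightarrow> ('a \<Rightarrow> real) set" where
  "block_ball I Bl x t = {z \<in> space (PiM I (\<lambda>_. lborel)). \<forall>b\<in>Bl. L2_dist b z x \<le> t}"

lemma emeasure_lborel_affine_preimage:
  fixes s c :: real
  assumes "s > 0" "A \<in> sets borel"
  shows "emeasure lborel {y. c + s * y \<in> A} = ennreal (1 / s) * emeasure lborel A"
proof -
  have "emeasure lborel A = emeasure (density (distr lborel borel (\<lambda>x. c + s * x)) (\<lambda>_. ennreal s)) A"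
    using lborel_real_affine[of s c] assms(1) by simp
  also have "\<dots> = ennreal s * emeasure lborel {y. c + s * y \<in> A}"
    using assms by (simp add: emeasure_density_const emeasure_distr vimage_def)
  finally have "ennreal (1 / s) * emeasure lborel A = (ennreal (1 / s) * ennreal s) * emeasure lborel {y. c + s * y \<in> A}"
    by (simp add: mult.assoc)
  also have "ennreal (1 / s) * ennreal s = 1"
    using assms(1) by (simp flip: ennreal_mult'')
  finally show ?thesis
    by simp
qed

lemma PiM_lborel_affine:
  fixes s :: real
  assumes I: "finite I" and s: "s > 0"
  shows "density (distr (PiM I (\<lambda>_. lborel)) (PiM I (\<lambda>_. lborel)) (\<lambda>z. \<lambda>j\<in>I. x j + s * z j))
           (\<lambda>_. ennreal (s ^ card I)) = PiM I (\<lambda>_. lborel)"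
proof -
  interpret product_sigma_finite "\<lambda>_::'a. lborel" by standard
  let ?M = "PiM I (\<lambda>_::'a. lborel)"
  let ?T = "\<lambda>z. \<lambda>j\<in>I. x j + s * z j"
  have T: "?T \<in> measurable ?M ?M" by measurable
  show ?thesis
  proof (rule PiM_eqI[OF I])
    fix A :: "'a \<Rightarrow> real set" assume A: "\<And>i. i \<in> I \<Longrightarrow> A i \<in> sets lborel"
    have "?T -` PiE I A \<inter> space ?M = PiE I (\<lambda>i. {y. x i + s * y \<in> A i})"
      by (auto simp: space_PiM PiE_def Pi_def extensional_def)
    moreover have "{y. x i + s * y \<in> A i} \<in> sets lborel" if "i \<in> I" for i
    proof -
      have "(\<lambda>y. x i + s * y) -` A i \<inter> space borel \<in> sets borel"
        using A[OF that] by measurable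
      then show ?thesis by (simp add: vimage_def)
    qed
    ultimately have "emeasure (density (distr ?M ?M ?T) (\<lambda>_. ennreal (s ^ card I))) (PiE I A)
        = ennreal (s ^ card I) * (\<Prod>i\<in>I. ennreal (1 / s) * emeasure lborel (A i))"
      using A s by (simp add: emeasure_density_const emeasure_distr[OF T] sets_PiM_I_finite I
          emeasure_PiM emeasure_lborel_affine_preimage)
    also have "\<dots> = (ennreal (s ^ card I) * ennreal (1 / s) ^ card I) * (\<Prod>i\<in>I. emeasure lborel (A i))"
      by (simp add: prod.distrib mult.assoc)
    also have "ennreal (s ^ card I) * ennreal (1 / s) ^ card I = 1"
      using s by (simp add: ennreal_power[symmetric] ennreal_mult''[symmetric] power_mult_distrib[symmetric])
    finally show "emeasure (density (distr ?M ?M ?T) (\<lambda>_. ennreal (s ^ card I))) (PiE I A)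
        = (\<Prod>i\<in>I. emeasure lborel (A i))"
      by (simp only: mult_1)
  qed simp
qed

lemma sets_block_ball:
  assumes "finite Bl" "\<And>b. b \<in> Bl \<Longrightarrow> b \<subseteq> I"
  shows "block_ball I Bl x t \<in> sets (PiM I (\<lambda>_. lborel))"
proof -
  have "(\<lambda>z. L2_dist b z x) \<in> borel_measurable (PiM I (\<lambda>_. lborel))" if "b \<in> Bl" for b
  proof -
    have [measurable]: "(\<lambda>z. z j) \<in> borel_measurable (PiM I (\<lambda>_. lborel))" if "j \<in> b" for j
      using assms(2)[OF \<open>b \<in> Bl\<close>] that
      by (intro measurable_component_singleton[where M="\<lambda>_. lborel", simplified]) auto
    show ?thesis
      unfolding L2_dist_def L2_set_def by measurable
  qed
  then show ?thesis
    unfolding block_ball_def using assms(1) by (intro sets.sets_Collect_finite_All measurable_sets) auto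
qed

lemma emeasure_block_ball_scale:
  fixes I :: "'a set"
  assumes I: "finite I" and Bl: "finite Bl" "\<And>b. b \<in> Bl \<Longrightarrow> b \<subseteq> I" and s: "s > 0"
  shows "emeasure (PiM I (\<lambda>_. lborel)) (block_ball I Bl x s)
    = ennreal (s ^ card I) * emeasure (PiM I (\<lambda>_. lborel)) (block_ball I Bl (\<lambda>_. 0) 1)"
proof -
  let ?M = "PiM I (\<lambda>_::'a. lborel)"
  let ?T = "\<lambda>z. \<lambda>j\<in>I. x j + s * z j"
  have T: "?T \<in> measurable ?M ?M" by measurable
  have "L2_dist b (?T z) x = s * L2_dist b z (\<lambda>_. 0)" if "b \<in> Bl" for b z
  proof -
    have "L2_dist b (?T z) x = L2_set (\<lambda>j. s * z j) b"
      unfolding L2_dist_def using Bl(2)[OF that] by (intro L2_set_cong) auto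
    then show ?thesis
      using s by (simp add: L2_set_right_distrib L2_dist_def)
  qed
  then have preimage: "?T -` block_ball I Bl x s \<inter> space ?M = block_ball I Bl (\<lambda>_. 0) 1"
    unfolding block_ball_def using s by (auto simp: space_PiM)
  have "emeasure ?M (block_ball I Bl x s)
      = emeasure (density (distr ?M ?M ?T) (\<lambda>_. ennreal (s ^ card I))) (block_ball I Bl x s)"
    by (simp only: PiM_lborel_affine[OF I s])
  also have "\<dots> = ennreal (s ^ card I) * emeasure ?M (?T -` block_ball I Bl x s \<inter> space ?M)"
    using sets_block_ball[OF Bl] by (simp add: emeasure_density_const emeasure_distr[OF T])
  finally show ?thesis
    by (simp only: preimage)
qed

lemma finite_blocks: "finite I \<Longrightarrow> \<Union>Bl = I \<Longrightarrow> finite Bl"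
  by (metis finite_UnionD)

lemma emeasure_unit_block_ball_less_top:
  assumes I: "finite I" and Bl: "\<Union>Bl = I"
  shows "emeasure (PiM I (\<lambda>_. lborel)) (block_ball I Bl (\<lambda>_. 0) 1) < \<infinity>"
proof -
  interpret product_sigma_finite "\<lambda>_::'a. lborel" by standard
  have "block_ball I Bl (\<lambda>_. 0) 1 \<subseteq> PiE I (\<lambda>_. {-1..1})"
  proof
    fix z assume z: "z \<in> block_ball I Bl (\<lambda>_. 0) 1"
    have "\<bar>z j\<bar> \<le> 1" if j: "j \<in> I" for j
    proof -
      obtain b where b: "b \<in> Bl" "j \<in> b"
        using j Bl by auto
      then have "finite b"
        using Bl I by (meson Union_upper finite_subset)
      then have "\<bar>z j\<bar> \<le> L2_set (\<lambda>j. \<bar>z j\<bar>) b"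
        using b(2) by (rule member_le_L2_set)
      also have "\<dots> = L2_dist b z (\<lambda>_. 0)"
        by (simp add: L2_dist_def L2_set_def)
      also have "\<dots> \<le> 1"
        using z b by (simp add: block_ball_def)
      finally show ?thesis .
    qed
    then show "z \<in> PiE I (\<lambda>_. {-1..1})"
      using z by (auto simp: block_ball_def space_PiM PiE_def Pi_def abs_le_iff)
  qed
  then have "emeasure (PiM I (\<lambda>_. lborel)) (block_ball I Bl (\<lambda>_. 0) 1) \<le> emeasure (PiM I (\<lambda>_. lborel)) (PiE I (\<lambda>_. {-1..1::real}))"
    by (intro emeasure_mono sets_PiM_I_finite I) auto
  also have "\<dots> = ennreal (2 ^ card I)"
    using I by (simp add: emeasure_PiM flip: ennreal_power)
  also have "\<dots> < \<infinity>"
    by simp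
  finally show ?thesis .
qed

lemma emeasure_unit_block_ball_pos:
  assumes I: "finite I" and Bl: "\<Union>Bl = I"
  shows "emeasure (PiM I (\<lambda>_. lborel)) (block_ball I Bl (\<lambda>_. 0) 1) > 0"
proof -
  interpret product_sigma_finite "\<lambda>_::'a. lborel" by standard
  define e where "e = 1 / (real (card I) + 1)"
  have e: "e > 0" "real (card I) * e \<le> 1"
    by (auto simp: e_def field_simps)
  have "PiE I (\<lambda>_. {-e..e}) \<subseteq> block_ball I Bl (\<lambda>_. 0) 1"
  proof
    fix z assume z: "z \<in> PiE I (\<lambda>_. {-e..e})"
    have "L2_dist b z (\<lambda>_. 0) \<le> 1" if "b \<in> Bl" for b
    proof -
      have b: "b \<subseteq> I"
        using that Bl by auto
      have "L2_dist b z (\<lambda>_. 0) \<le> (\<Sum>j\<in>b. \<bar>z j\<bar>)"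
        unfolding L2_dist_def using L2_set_le_sum_abs[of z b] by simp
      also have "\<dots> \<le> (\<Sum>j\<in>b. e)"
        using z b by (intro sum_mono) (auto simp: PiE_def Pi_def abs_le_iff)
      also have "\<dots> \<le> real (card I) * e"
        using card_mono[OF I b] e(1) by (simp add: mult_right_mono)
      finally show ?thesis
        using e(2) by linarith
    qed
    then show "z \<in> block_ball I Bl (\<lambda>_. 0) 1"
      using z by (auto simp: block_ball_def space_PiM PiE_def)
  qed
  have "0 < ennreal ((2 * e) ^ card I)"
    using e(1) by simp
  also have "\<dots> = emeasure (PiM I (\<lambda>_. lborel)) (PiE I (\<lambda>_. {-e..e}))"
    using I e(1) by (simp add: emeasure_PiM ennreal_power)
  also have "\<dots> \<le> emeasure (PiM I (\<lambda>_. lborel)) (block_ball I Bl (\<lambda>_. 0) 1)"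
    using \<open>PiE I (\<lambda>_. {-e..e}) \<subseteq> block_ball I Bl (\<lambda>_. 0) 1\<close> finite_blocks[OF I Bl] Bl
    by (intro emeasure_mono sets_block_ball) auto
  finally show ?thesis .
qed

lemma disjoint_family_on_separated_block_balls:
  assumes "\<And>x y. x \<in> N \<Longrightarrow> y \<in> N \<Longrightarrow> x \<noteq> y \<Longrightarrow> \<exists>b\<in>Bl. L2_dist b x y > \<delta>"
  shows "disjoint_family_on (\<lambda>y. block_ball I Bl y (\<delta> / 2)) N"
  unfolding disjoint_family_on_def
proof (intro ballI impI)
  fix x y assume "x \<in> N" "y \<in> N" "x \<noteq> y"
  then obtain b where b: "b \<in> Bl" "L2_dist b x y > \<delta>"
    using assms by blast
  have False if "z \<in> block_ball I Bl x (\<delta> / 2)" "z \<in> block_ball I Bl y (\<delta> / 2)" for z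
  proof -
    have "L2_dist b x y \<le> L2_dist b z x + L2_dist b z y"
      using L2_dist_triangle[of b x y z] by (simp add: L2_dist_commute)
    also have "\<dots> \<le> \<delta> / 2 + \<delta> / 2"
      using that b(1) unfolding block_ball_def by (intro add_mono) auto
    finally show False
      using b(2) by simp
  qed
  then show "block_ball I Bl x (\<delta> / 2) \<inter> block_ball I Bl y (\<delta> / 2) = {}"
    by blast
qed

lemma UN_block_balls_subset:
  assumes "\<And>x b. x \<in> N \<Longrightarrow> b \<in> Bl \<Longrightarrow> L2_dist b x (\<lambda>_. 0) \<le> R"
  shows "(\<Union>y\<in>N. block_ball I Bl y t) \<subseteq> block_ball I Bl (\<lambda>_. 0) (R + t)"
proof
  fix z assume "z \<in> (\<Union>y\<in>N. block_ball I Bl y t)"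
  then obtain y where y: "y \<in> N" "z \<in> block_ball I Bl y t"
    by blast
  have "L2_dist b z (\<lambda>_. 0) \<le> R + t" if "b \<in> Bl" for b
    using L2_dist_triangle[of b z "\<lambda>_. 0" y] assms[OF y(1) that] y(2) that
    by (auto simp: block_ball_def)
  then show "z \<in> block_ball I Bl (\<lambda>_. 0) (R + t)"
    using y(2) by (auto simp: block_ball_def)
qed

lemma card_block_separated_le:
  fixes I :: "'a set" and N :: "('a \<Rightarrow> real) set"
  assumes I: "finite I" and Bl: "\<Union>Bl = I" and "\<delta> > 0" "R \<ge> 0" and "finite N"
    and bounded: "\<And>x b. x \<in> N \<Longrightarrow> b \<in> Bl \<Longrightarrow> L2_dist b x (\<lambda>_. 0) \<le> R"
    and separated: "\<And>x y. x \<in> N \<Longrightarrow> y \<in> N \<Longrightarrow> x \<noteq> y \<Longrightarrow> \<exists>b\<in>Bl. L2_dist b x y > \<delta>"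
  shows "real (card N) \<le> (1 + 2 * R / \<delta>) ^ card I"
proof -
  let ?M = "PiM I (\<lambda>_::'a. lborel)"
  let ?D = "card I"
  have Bl': "finite Bl" "\<And>b. b \<in> Bl \<Longrightarrow> b \<subseteq> I"
    using finite_blocks[OF I Bl] Bl by auto
  obtain v where v: "emeasure ?M (block_ball I Bl (\<lambda>_. 0) 1) = ennreal v" "v > 0"
    using emeasure_unit_block_ball_less_top[OF I Bl] emeasure_unit_block_ball_pos[OF I Bl]
    by (cases "emeasure ?M (block_ball I Bl (\<lambda>_. 0) 1)") auto
  have scale: "emeasure ?M (block_ball I Bl y t) = ennreal (t ^ ?D * v)" if "t > 0" for y t
    using emeasure_block_ball_scale[OF I Bl' that, of y] v that by (simp add: ennreal_mult)
  have "ennreal (real (card N) * ((\<delta> / 2) ^ ?D * v)) = (\<Sum>y\<in>N. emeasure ?M (block_ball I Bl y (\<delta> / 2)))"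
    using \<open>\<delta> > 0\<close> v(2) by (simp add: scale ennreal_of_nat_eq_real_of_nat[symmetric] ennreal_mult')
  also have "\<dots> = emeasure ?M (\<Union>y\<in>N. block_ball I Bl y (\<delta> / 2))"
    using disjoint_family_on_separated_block_balls[OF separated] \<open>finite N\<close> sets_block_ball[OF Bl']
    by (intro sum_emeasure) auto
  also have "\<dots> \<le> emeasure ?M (block_ball I Bl (\<lambda>_. 0) (R + \<delta> / 2))"
    using UN_block_balls_subset[OF bounded] by (intro emeasure_mono sets_block_ball Bl')
  also have "\<dots> = ennreal ((R + \<delta> / 2) ^ ?D * v)"
    using \<open>R \<ge> 0\<close> \<open>\<delta> > 0\<close> by (intro scale) simp
  finally have "(real (card N) * (\<delta> / 2) ^ ?D) * v \<le> (R + \<delta> / 2) ^ ?D * v"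
    using \<open>R \<ge> 0\<close> \<open>\<delta> > 0\<close> v(2) by (subst (asm) ennreal_le_iff) (auto simp: mult.assoc)
  then have "real (card N) * (\<delta> / 2) ^ ?D \<le> (R + \<delta> / 2) ^ ?D"
    using v(2) by (rule mult_right_le_imp_le)
  then have "real (card N) \<le> (R + \<delta> / 2) ^ ?D / (\<delta> / 2) ^ ?D"
    using \<open>\<delta> > 0\<close> by (simp add: pos_le_divide_eq)
  also have "\<dots> = ((R + \<delta> / 2) / (\<delta> / 2)) ^ ?D"
    by (rule power_divide[symmetric])
  also have "(R + \<delta> / 2) / (\<delta> / 2) = 1 + 2 * R / \<delta>"
    using \<open>\<delta> > 0\<close> by (simp add: field_simps)
  finally show ?thesis .
qed

text \<open>A maximal \<delta>-separated subset of K is a \<delta>-net of K, and the packing bound shows that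
  maximal ones exist.\<close>
lemma exists_block_net:
  fixes I :: "'a set" and K :: "('a \<Rightarrow> real) set"
  assumes I: "finite I" and Bl: "\<Union>Bl = I" and \<delta>: "\<delta> > 0" and R: "R \<ge> 0"
    and bounded: "\<And>x b. x \<in> K \<Longrightarrow> b \<in> Bl \<Longrightarrow> L2_dist b x (\<lambda>_. 0) \<le> R"
  obtains N where "finite N" "N \<subseteq> K" "real (card N) \<le> (1 + 2 * R / \<delta>) ^ card I"
    "\<And>x. x \<in> K \<Longrightarrow> \<exists>y\<in>N. \<forall>b\<in>Bl. L2_dist b x y \<le> \<delta>"
proof -
  define sep where "sep N \<longleftrightarrow> finite N \<and> N \<subseteq> K \<and> (\<forall>x\<in>N. \<forall>y\<in>N. x \<noteq> y \<longrightarrow> (\<exists>b\<in>Bl. L2_dist b x y > \<delta>))" for N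
  have packing: "real (card N) \<le> (1 + 2 * R / \<delta>) ^ card I" if "sep N" for N
    using that unfolding sep_def by (intro card_block_separated_le[OF I Bl \<delta> R]) (auto intro: bounded)
  have "card N < nat \<lceil>(1 + 2 * R / \<delta>) ^ card I\<rceil> + 1" if "sep N" for N
  proof -
    have "real (card N) \<le> real (nat \<lceil>(1 + 2 * R / \<delta>) ^ card I\<rceil>)"
      using packing[OF that] real_nat_ceiling_ge by (rule order_trans)
    then show ?thesis
      by simp
  qed
  moreover have "sep {}"
    by (simp add: sep_def)
  ultimately obtain N where N: "sep N" and max: "\<And>N'. sep N' \<Longrightarrow> card N' \<le> card N"
    using ex_has_greatest_nat[of sep "{}" card] by metis
  have cover: "\<exists>y\<in>N. \<forall>b\<in>Bl. L2_dist b x y \<le> \<delta>" if "x \<in> K" for x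
  proof (rule ccontr)
    assume "\<not> ?thesis"
    then have far: "\<And>y. y \<in> N \<Longrightarrow> \<exists>b\<in>Bl. L2_dist b x y > \<delta>"
      by (auto simp: not_le)
    then have "x \<notin> N"
      using \<delta> by (force simp: L2_dist_self)
    have far': "\<exists>b\<in>Bl. L2_dist b y x > \<delta>" if "y \<in> N" for y
      using far[OF that] by (simp add: L2_dist_commute)
    have "\<forall>u\<in>insert x N. \<forall>w\<in>insert x N. u \<noteq> w \<longrightarrow> (\<exists>b\<in>Bl. L2_dist b u w > \<delta>)"
      using N far far' unfolding sep_def by blast
    then have "sep (insert x N)"
      using N \<open>x \<in> K\<close> by (simp add: sep_def)
    then have "card (insert x N) \<le> card N"
      by (rule max)
    moreover have "card (insert x N) = Suc (card N)"
      using N \<open>x \<notin> N\<close> by (simp add: sep_def)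
    ultimately show False
      by simp
  qed
  have "finite N" "N \<subseteq> K"
    using N by (simp_all add: sep_def)
  then show thesis
    using packing[OF N] cover by (rule that)
qed

section \<open>Numerical estimates\<close>

lemma one_plus_mult_power_le:
  fixes t x :: real
  assumes "0 \<le> t" "t \<le> 1" "x \<ge> 0"
  shows "(1 + t * x) ^ m \<le> 1 + t * ((1 + x) ^ m - 1)"
proof (induction m)
  case 0
  then show ?case by simp
next
  case (Suc m)
  have "t * t \<le> t"
    using assms(1,2) by (simp add: mult_left_le)
  moreover have "x * ((1 + x) ^ m - 1) \<ge> 0"
    using assms(3) by simp
  ultimately have "t * t * (x * ((1 + x) ^ m - 1)) \<le> t * (x * ((1 + x) ^ m - 1))"
    by (rule mult_right_mono)
  moreover have "(1 + t * x) ^ Suc m \<le> (1 + t * x) * (1 + t * ((1 + x) ^ m - 1))"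
    using Suc assms by (simp add: mult_left_mono)
  ultimately show ?case
    by (simp add: algebra_simps)
qed

lemma sqrt_power_eq_powr:
  assumes "y > 0"
  shows "sqrt y ^ m = y powr (real m / 2)"
proof -
  have "sqrt y ^ m = (y powr (1 / 2)) ^ m"
    using assms by (simp add: powr_half_sqrt)
  also have "\<dots> = y powr (real m / 2)"
    using assms by (simp add: powr_power)
  finally show ?thesis .
qed

lemma power2_power_commute: "((x::'a::monoid_mult) ^ k)\<^sup>2 = (x\<^sup>2) ^ k"
  by (simp only: power_mult[symmetric] mult.commute)

lemma incoherent_op_norm_power_le:
  fixes R \<mu> :: real
  assumes "R > 0" "0 \<le> \<mu>" "\<mu> \<le> R\<^sup>2" "r \<ge> 1"
  shows "R * sqrt (R\<^sup>2 + \<mu> * (real r - 1)) ^ (d - 1) \<le> R ^ (d - 1) * sqrt (R\<^sup>2 + \<mu> * real (r ^ d))"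
proof -
  define t where "t = \<mu> / R\<^sup>2"
  have t: "0 \<le> t" "t \<le> 1" "\<mu> = R\<^sup>2 * t"
    using assms by (auto simp: t_def)
  have "(1 + t * (real r - 1)) ^ (d - 1) \<le> 1 + t * ((1 + (real r - 1)) ^ (d - 1) - 1)"
    using t assms(4) by (intro one_plus_mult_power_le) auto
  also have "\<dots> \<le> 1 + t * real (r ^ d)"
    using t assms(4) power_increasing[of "d - 1" d "real r"] by (intro add_left_mono mult_left_mono) auto
  finally have "R\<^sup>2 * (R\<^sup>2) ^ (d - 1) * (1 + t * (real r - 1)) ^ (d - 1)
      \<le> R\<^sup>2 * (R\<^sup>2) ^ (d - 1) * (1 + t * real (r ^ d))"
    by (rule mult_left_mono) simp
  moreover have "(R * sqrt (R\<^sup>2 + \<mu> * (real r - 1)) ^ (d - 1))\<^sup>2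
      = R\<^sup>2 * (R\<^sup>2) ^ (d - 1) * (1 + t * (real r - 1)) ^ (d - 1)"
  proof -
    have "0 \<le> R\<^sup>2 + \<mu> * (real r - 1)"
      using assms(2,4) by simp
    then have "(sqrt (R\<^sup>2 + \<mu> * (real r - 1)) ^ (d - 1))\<^sup>2 = (R\<^sup>2 + \<mu> * (real r - 1)) ^ (d - 1)"
      by (simp only: power2_power_commute real_sqrt_pow2)
    also have "\<dots> = (R\<^sup>2) ^ (d - 1) * (1 + t * (real r - 1)) ^ (d - 1)"
      by (simp add: t(3) algebra_simps flip: power_mult_distrib)
    finally show ?thesis
      by (simp add: power_mult_distrib)
  qed
  moreover have "(R ^ (d - 1) * sqrt (R\<^sup>2 + \<mu> * real (r ^ d)))\<^sup>2
      = R\<^sup>2 * (R\<^sup>2) ^ (d - 1) * (1 + t * real (r ^ d))"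
  proof -
    have "0 \<le> R\<^sup>2 + \<mu> * real (r ^ d)"
      using assms(2) by simp
    then have "(R ^ (d - 1) * sqrt (R\<^sup>2 + \<mu> * real (r ^ d)))\<^sup>2 = (R\<^sup>2) ^ (d - 1) * (R\<^sup>2 + \<mu> * real (r ^ d))"
      by (simp only: power_mult_distrib power2_power_commute real_sqrt_pow2)
    then show ?thesis
      unfolding t(3) by (simp only: ring_distribs mult_1_left mult_1_right mult_ac)
  qed
  ultimately have "(R * sqrt (R\<^sup>2 + \<mu> * (real r - 1)) ^ (d - 1))\<^sup>2
      \<le> (R ^ (d - 1) * sqrt (R\<^sup>2 + \<mu> * real (r ^ d)))\<^sup>2"
    by (simp only:)
  moreover have "0 \<le> R ^ (d - 1) * sqrt (R\<^sup>2 + \<mu> * real (r ^ d))"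
    using assms(1,2) by simp
  ultimately show ?thesis
    by (rule power2_le_imp_le)
qed

lemma one_plus_le_scaled:
  fixes a \<epsilon> :: real
  assumes "a \<ge> 1" "0 < \<epsilon>" "\<epsilon> \<le> 1"
  shows "1 + 2 * a / (\<epsilon> / (2 * (real d + 1))) \<le> 6 * (real d + 1) / \<epsilon> * a"
proof -
  have "1 * a \<le> 2 * (real d + 1) * a"
    using assms(1) by (intro mult_right_mono) auto
  then have "\<epsilon> \<le> 2 * (real d + 1) * a"
    using assms(1,3) by linarith
  then have "1 \<le> 2 * (real d + 1) * a / \<epsilon>"
    using assms(2) by simp
  moreover have "2 * a / (\<epsilon> / (2 * (real d + 1))) = 2 * (2 * (real d + 1) * a / \<epsilon>)"
    and "6 * (real d + 1) / \<epsilon> * a = 3 * (2 * (real d + 1) * a / \<epsilon>)"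
    by (simp_all add: field_simps)
  ultimately show ?thesis
    by linarith
qed

lemma covering_bound_arith:
  fixes d n r :: nat and \<epsilon> \<mu> R :: real
  assumes "r \<ge> 1" "0 < \<epsilon>" "\<epsilon> \<le> 1" "0 \<le> \<mu>" "\<mu> \<le> 1" "R \<ge> 1"
  defines "L \<equiv> sqrt (R\<^sup>2 + \<mu> * (real r - 1))" and "\<eta> \<equiv> \<epsilon> / (2 * (real d + 1))"
  shows "(1 + 2 * L ^ d / \<eta>) ^ (r ^ d) * (1 + 2 * (R * L ^ (d - 1)) / \<eta>) ^ (r * n * d)
    \<le> (6 * (real d + 1) / \<epsilon>) ^ (r ^ d + r * n * d)
       * (R\<^sup>2 + \<mu> * real r) powr (real (r ^ d * d) / 2)
       * (R\<^sup>2 + \<mu> * real (r ^ d)) powr (real (d * n * r) / 2)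
       * R ^ ((d - 1) * d * n * r)"
proof -
  define c where "c = 6 * (real d + 1) / \<epsilon>"
  define X where "X = R\<^sup>2 + \<mu> * (real r - 1)"
  define Y where "Y = R\<^sup>2 + \<mu> * real (r ^ d)"
  have R2: "R\<^sup>2 \<ge> 1"
    using assms(6) by (simp add: one_le_power)
  then have "\<mu> \<le> R\<^sup>2"
    using assms(5) by linarith
  have "0 \<le> \<mu> * (real r - 1)" "0 \<le> \<mu> * real (r ^ d)"
    using assms(1,4) by simp_all
  then have X: "X \<ge> 1" and Y: "Y \<ge> 1"
    using R2 by (simp_all add: X_def Y_def del: of_nat_power)
  then have L: "L \<ge> 1"
    by (simp add: L_def X_def[symmetric])
  have "c \<ge> 0" "\<eta> > 0"
    using assms(2) by (simp_all add: c_def \<eta>_def)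
  have RL: "R * L ^ (d - 1) \<ge> 1"
    using mult_mono[OF assms(6) one_le_power[OF L, of "d - 1"]] assms(6) by simp
  have core: "1 + 2 * L ^ d / \<eta> \<le> c * L ^ d"
    unfolding c_def \<eta>_def using L assms(2,3) by (intro one_plus_le_scaled one_le_power)
  have "1 + 2 * (R * L ^ (d - 1)) / \<eta> \<le> c * (R * L ^ (d - 1))"
    unfolding c_def \<eta>_def using RL assms(2,3) by (intro one_plus_le_scaled)
  also have "\<dots> \<le> c * (R ^ (d - 1) * sqrt Y)"
    unfolding L_def Y_def using assms(1,4,6) \<open>\<mu> \<le> R\<^sup>2\<close> \<open>c \<ge> 0\<close>
    by (intro mult_left_mono incoherent_op_norm_power_le) auto
  finally have factor: "1 + 2 * (R * L ^ (d - 1)) / \<eta> \<le> c * (R ^ (d - 1) * sqrt Y)" .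
  have "(1 + 2 * L ^ d / \<eta>) ^ (r ^ d) * (1 + 2 * (R * L ^ (d - 1)) / \<eta>) ^ (r * n * d)
      \<le> (c * L ^ d) ^ (r ^ d) * (c * (R ^ (d - 1) * sqrt Y)) ^ (r * n * d)"
    using \<open>\<eta> > 0\<close> \<open>c \<ge> 0\<close> L Y assms(6)
    by (intro mult_mono power_mono core factor) simp_all
  also have "\<dots> = c ^ (r ^ d + r * n * d) * sqrt X ^ (d * r ^ d) * (sqrt Y ^ (r * n * d) * R ^ ((d - 1) * (r * n * d)))"
    by (simp only: L_def X_def power_mult_distrib power_mult[symmetric] power_add mult_ac)
  also have "\<dots> \<le> c ^ (r ^ d + r * n * d) * (R\<^sup>2 + \<mu> * real r) powr (real (r ^ d * d) / 2)
      * (Y powr (real (d * n * r) / 2) * R ^ ((d - 1) * d * n * r))"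
  proof -
    have "sqrt X ^ (d * r ^ d) = X powr (real (r ^ d * d) / 2)"
      using X by (subst sqrt_power_eq_powr) (simp_all add: mult.commute)
    also have "\<dots> \<le> (R\<^sup>2 + \<mu> * real r) powr (real (r ^ d * d) / 2)"
      using X assms(4) by (intro powr_mono2) (simp_all add: X_def algebra_simps)
    finally have "sqrt X ^ (d * r ^ d) \<le> (R\<^sup>2 + \<mu> * real r) powr (real (r ^ d * d) / 2)" .
    moreover have "sqrt Y ^ (r * n * d) = Y powr (real (d * n * r) / 2)"
      using Y by (subst sqrt_power_eq_powr) (simp_all add: mult_ac)
    moreover have "(d - 1) * (r * n * d) = (d - 1) * d * n * r"
      by (simp only: mult_ac)
    ultimately show ?thesis
      using \<open>c \<ge> 0\<close> assms(6) by (simp only:) (intro mult_right_mono mult_left_mono, simp_all)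
  qed
  finally show ?thesis
    by (simp only: c_def Y_def mult_ac)
qed

section \<open>Nets of Tucker tensors\<close>

definition core_set :: "nat \<Rightarrow> nat \<Rightarrow> (nat list \<Rightarrow> real) set" where
  "core_set d r = {C. frob d r C = 1 \<and> (\<forall>i<d. \<forall>p<r. \<forall>q<r. p \<noteq> q \<longrightarrow> unfolding_gram d r C i p q = 0)}"

definition factor_set :: "nat \<Rightarrow> nat \<Rightarrow> real \<Rightarrow> real \<Rightarrow> (nat \<Rightarrow> nat \<Rightarrow> real) set" where
  "factor_set n r R \<mu> = {U. (\<forall>k<r. vnorm n (U k) \<le> R)
      \<and> (\<forall>k<r. \<forall>k'<r. k \<noteq> k' \<longrightarrow> \<bar>vinner n (U k) (U k')\<bar> \<le> \<mu>)}"

lemma core_net: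
  assumes "\<delta> > 0"
  obtains N where "finite N" "N \<subseteq> core_set d r" "real (card N) \<le> (1 + 2 / \<delta>) ^ (r ^ d)"
    "\<And>C. C \<in> core_set d r \<Longrightarrow> \<exists>C'\<in>N. frob d r (\<lambda>ks. C ks - C' ks) \<le> \<delta>"
proof -
  have "L2_dist (idx d r) C (\<lambda>_. 0) \<le> 1" if "C \<in> core_set d r" for C
    using that by (simp add: core_set_def L2_dist_def frob_eq_L2_set)
  then obtain N where "finite N" "N \<subseteq> core_set d r" "real (card N) \<le> (1 + 2 * 1 / \<delta>) ^ card (idx d r)"
    "\<And>C. C \<in> core_set d r \<Longrightarrow> \<exists>C'\<in>N. \<forall>b\<in>{idx d r}. L2_dist b C C' \<le> \<delta>"
    using exists_block_net[of "idx d r" "{idx d r}" \<delta> 1 "core_set d r"] assms by auto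
  then show thesis
    by (intro that) (auto simp: card_idx L2_dist_def frob_eq_L2_set)
qed

lemma factor_net:
  assumes "\<delta> > 0" "R \<ge> 0"
  obtains N where "finite N" "N \<subseteq> factor_set n r R \<mu>" "real (card N) \<le> (1 + 2 * R / \<delta>) ^ (r * n)"
    "\<And>U. U \<in> factor_set n r R \<mu> \<Longrightarrow> \<exists>V\<in>N. \<forall>k<r. vnorm n (\<lambda>a. U k a - V k a) \<le> \<delta>"
proof -
  define I where "I = {..<r} \<times> {..<n}"
  define Bl where "Bl = (\<lambda>k. {k} \<times> {..<n}) ` {..<r}"
  have block: "L2_dist ({k} \<times> {..<n}) w w' = vnorm n (\<lambda>a. w (k, a) - w' (k, a))" for k and w w' :: "nat \<times> nat \<Rightarrow> real"
  proof -
    have "{k} \<times> {..<n} = Pair k ` {..<n}"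
      by auto
    then show ?thesis
      by (simp add: L2_dist_def L2_set_def vnorm_def sum.reindex inj_on_def)
  qed
  have blocks: "\<Union>Bl = I"
    by (auto simp: Bl_def I_def)
  have bounded: "L2_dist b w (\<lambda>_. 0) \<le> R" if "w \<in> case_prod ` factor_set n r R \<mu>" "b \<in> Bl" for w b
    using that by (auto simp: factor_set_def Bl_def block)
  obtain N' where N': "finite N'" "N' \<subseteq> case_prod ` factor_set n r R \<mu>"
      "real (card N') \<le> (1 + 2 * R / \<delta>) ^ card I"
      "\<And>w. w \<in> case_prod ` factor_set n r R \<mu> \<Longrightarrow> \<exists>w'\<in>N'. \<forall>b\<in>Bl. L2_dist b w w' \<le> \<delta>"
    using exists_block_net[OF _ blocks assms bounded] by (auto simp: I_def)
  show thesis
  proof (rule that)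
    show "finite (curry ` N')" "curry ` N' \<subseteq> factor_set n r R \<mu>"
      using N'(1,2) by auto
    have "card (curry ` N') \<le> card N'"
      using N'(1) by (rule card_image_le)
    then show "real (card (curry ` N')) \<le> (1 + 2 * R / \<delta>) ^ (r * n)"
      using N'(3) by (simp add: I_def card_cartesian_product)
    fix U assume "U \<in> factor_set n r R \<mu>"
    then obtain w' where "w' \<in> N'" "\<forall>b\<in>Bl. L2_dist b (case_prod U) w' \<le> \<delta>"
      using N'(4) by blast
    then show "\<exists>V\<in>curry ` N'. \<forall>k<r. vnorm n (\<lambda>a. U k a - V k a) \<le> \<delta>"
      by (auto simp: Bl_def block)
  qed
qed

lemma frob_tucker_diff_le:
  assumes "r \<ge> 1" "0 \<le> \<mu>" "\<delta> \<ge> 0"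
    and U: "\<And>i. i < d \<Longrightarrow> U i \<in> factor_set n r R \<mu>"
    and V: "\<And>i. i < d \<Longrightarrow> V i \<in> factor_set n r R \<mu>"
    and C': "C' \<in> core_set d r" and core: "frob d r (\<lambda>ks. C ks - C' ks) \<le> \<delta>\<^sub>0"
    and cols: "\<And>i k. i < d \<Longrightarrow> k < r \<Longrightarrow> vnorm n (\<lambda>a. U i k a - V i k a) \<le> \<delta>"
  defines "L \<equiv> sqrt (R\<^sup>2 + \<mu> * (real r - 1))"
  shows "frob d n (\<lambda>is. tucker d n r C U is - tucker d n r C' V is) \<le> L ^ d * \<delta>\<^sub>0 + real d * (L ^ (d - 1) * \<delta>)"
proof -
  have op: "op_norm_le n r W L" if "W \<in> factor_set n r R \<mu>" for W
    using that assms(1,2) unfolding L_def factor_set_def by (intro op_norm_le_incoherent) auto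
  have "frob d n (\<lambda>is. tucker d n r C U is - tucker d n r C' V is)
      = frob d n (\<lambda>is. mode_mult d r C U is - mode_mult d r C' V is)"
    unfolding frob_eq_L2_set by (intro L2_set_cong) (simp_all add: tucker_eq_mode_mult)
  also have "\<dots> \<le> L ^ d * \<delta>\<^sub>0 + real d * (L ^ (d - 1) * \<delta>)"
    using C' core cols \<open>\<delta> \<ge> 0\<close> assms(1,2)
    by (intro frob_mode_mult_perturbation op U V) (auto simp: L_def core_set_def frob_eq_sqrt_frob_sq)
  finally show ?thesis .
qed

lemma BsetE:
  assumes "X \<in> Bset d n r R \<mu> \<theta>"
  obtains C U where "X = tucker d n r C U" "\<And>i. i < d \<Longrightarrow> U i \<in> factor_set n r R \<mu>" "C \<in> core_set d r"
proof -
  obtain C U where "X = tucker d n r C U"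
    and "\<forall>i<d. \<forall>k<r. vnorm n (U i k) \<le> R"
    and "\<forall>i<d. \<forall>k<r. \<forall>k'<r. k \<noteq> k' \<longrightarrow> \<bar>vinner n (U i k) (U i k')\<bar> \<le> \<mu>"
    and "frob d r C = 1"
    and "\<forall>i<d. \<forall>p<r. \<forall>q<r. p \<noteq> q \<longrightarrow> (\<Sum>ks\<in>{ks\<in>idx d r. ks ! i = p}. C ks * C (ks[i := q])) = 0"
    using assms unfolding Bset_def by (elim CollectE exE conjE)
  then show thesis
    by (intro that) (auto simp: factor_set_def core_set_def unfolding_gram_def)
qed

lemma Bset_near_tucker_net:
  assumes "r \<ge> 1" "0 \<le> \<mu>" "\<delta> \<ge> 0" "X \<in> Bset d n r R \<mu> \<theta>"
    and NC: "NC \<subseteq> core_set d r" "\<And>C. C \<in> core_set d r \<Longrightarrow> \<exists>C'\<in>NC. frob d r (\<lambda>ks. C ks - C' ks) \<le> \<delta>\<^sub>0"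
    and NU: "NU \<subseteq> factor_set n r R \<mu>"
      "\<And>U. U \<in> factor_set n r R \<mu> \<Longrightarrow> \<exists>V\<in>NU. \<forall>k<r. vnorm n (\<lambda>a. U k a - V k a) \<le> \<delta>"
  defines "L \<equiv> sqrt (R\<^sup>2 + \<mu> * (real r - 1))"
  shows "\<exists>C'\<in>NC. \<exists>V\<in>PiE {..<d} (\<lambda>_. NU).
    frob d n (\<lambda>is. X is - tucker d n r C' V is) \<le> L ^ d * \<delta>\<^sub>0 + real d * (L ^ (d - 1) * \<delta>)"
proof -
  obtain C U where X: "X = tucker d n r C U" and U: "\<And>i. i < d \<Longrightarrow> U i \<in> factor_set n r R \<mu>"
    and C: "C \<in> core_set d r"
    using assms(4) by (rule BsetE) blast
  obtain C' where C': "C' \<in> NC" "frob d r (\<lambda>ks. C ks - C' ks) \<le> \<delta>\<^sub>0"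
    using NC(2)[OF C] by blast
  obtain V where V: "\<And>i. i < d \<Longrightarrow> V i \<in> NU \<and> (\<forall>k<r. vnorm n (\<lambda>a. U i k a - V i k a) \<le> \<delta>)"
    using NU(2)[OF U] by metis
  define V' where "V' = restrict V {..<d}"
  have "V' \<in> PiE {..<d} (\<lambda>_. NU)"
    using V by (simp add: V'_def)
  moreover have "frob d n (\<lambda>is. X is - tucker d n r C' V' is) \<le> L ^ d * \<delta>\<^sub>0 + real d * (L ^ (d - 1) * \<delta>)"
    unfolding X L_def
  proof (rule frob_tucker_diff_le[OF assms(1-3) U _ _ C'(2)])
    show "V' i \<in> factor_set n r R \<mu>" if "i < d" for i
      using V[OF that] NU(1) that by (auto simp: V'_def)
    show "C' \<in> core_set d r"
      using C'(1) NC(1) by blast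
    show "vnorm n (\<lambda>a. U i k a - V' i k a) \<le> \<delta>" if "i < d" "k < r" for i k
      using V that by (simp add: V'_def)
  qed
  ultimately show ?thesis
    using C'(1) by blast
qed

lemma tucker_external_net:
  fixes \<eta> :: real
  assumes "r \<ge> 1" "0 \<le> \<mu>" "R > 0" "\<eta> > 0"
  defines "L \<equiv> sqrt (R\<^sup>2 + \<mu> * (real r - 1))"
  obtains E where "finite E"
    "real (card E) \<le> (1 + 2 * L ^ d / \<eta>) ^ (r ^ d) * (1 + 2 * (R * L ^ (d - 1)) / \<eta>) ^ (r * n * d)"
    "\<And>X. X \<in> Bset d n r R \<mu> \<theta> \<Longrightarrow> \<exists>Y\<in>E. frob d n (\<lambda>is. X is - Y is) \<le> (real d + 1) * \<eta>"
proof -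
  have "L \<ge> R"
    using assms(1,2,3) by (simp add: L_def real_le_rsqrt)
  then have "L > 0"
    using assms(3) by linarith
  define \<delta>\<^sub>0 where "\<delta>\<^sub>0 = \<eta> / L ^ d"
  define \<delta> where "\<delta> = \<eta> / L ^ (d - 1)"
  have "\<delta>\<^sub>0 > 0" "\<delta> > 0"
    using \<open>L > 0\<close> assms(4) by (simp_all add: \<delta>\<^sub>0_def \<delta>_def)
  obtain NC where NC: "finite NC" "NC \<subseteq> core_set d r" "real (card NC) \<le> (1 + 2 / \<delta>\<^sub>0) ^ (r ^ d)"
    "\<And>C. C \<in> core_set d r \<Longrightarrow> \<exists>C'\<in>NC. frob d r (\<lambda>ks. C ks - C' ks) \<le> \<delta>\<^sub>0"
    by (rule core_net[OF \<open>\<delta>\<^sub>0 > 0\<close>, where d=d and r=r]) blast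
  obtain NU where NU: "finite NU" "NU \<subseteq> factor_set n r R \<mu>" "real (card NU) \<le> (1 + 2 * R / \<delta>) ^ (r * n)"
    "\<And>U. U \<in> factor_set n r R \<mu> \<Longrightarrow> \<exists>V\<in>NU. \<forall>k<r. vnorm n (\<lambda>a. U k a - V k a) \<le> \<delta>"
    by (rule factor_net[OF \<open>\<delta> > 0\<close> less_imp_le[OF assms(3)], where n=n and r=r and \<mu>=\<mu>]) blast
  define E where "E = (\<lambda>(C', V). tucker d n r C' V) ` (NC \<times> PiE {..<d} (\<lambda>_. NU))"
  show thesis
  proof (rule that)
    show "finite E"
      using NC(1) NU(1) by (simp add: E_def finite_PiE)
    have "card E \<le> card (NC \<times> PiE {..<d} (\<lambda>_. NU))"
      unfolding E_def using NC(1) NU(1) by (intro card_image_le) (simp add: finite_PiE)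
    also have "\<dots> = card NC * card NU ^ d"
      by (simp add: card_cartesian_product card_PiE)
    finally have "real (card E) \<le> real (card NC) * real (card NU) ^ d"
      unfolding of_nat_power[symmetric] of_nat_mult[symmetric] of_nat_le_iff .
    also have "\<dots> \<le> (1 + 2 / \<delta>\<^sub>0) ^ (r ^ d) * ((1 + 2 * R / \<delta>) ^ (r * n)) ^ d"
      using NC(3) NU(3) by (intro mult_mono power_mono) auto
    also have "\<dots> = (1 + 2 * L ^ d / \<eta>) ^ (r ^ d) * (1 + 2 * (R * L ^ (d - 1)) / \<eta>) ^ (r * n * d)"
      by (simp add: \<delta>\<^sub>0_def \<delta>_def power_mult mult.assoc)
    finally show "real (card E) \<le> \<dots>" .
  next
    fix X assume "X \<in> Bset d n r R \<mu> \<theta>"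
    then have "\<exists>C'\<in>NC. \<exists>V\<in>PiE {..<d} (\<lambda>_. NU).
        frob d n (\<lambda>is. X is - tucker d n r C' V is) \<le> L ^ d * \<delta>\<^sub>0 + real d * (L ^ (d - 1) * \<delta>)"
      unfolding L_def using assms(1,2) \<open>\<delta> > 0\<close> NC(2,4) NU(2,4)
      by (intro Bset_near_tucker_net) auto
    moreover have "L ^ d * \<delta>\<^sub>0 + real d * (L ^ (d - 1) * \<delta>) = (real d + 1) * \<eta>"
      using \<open>L > 0\<close> by (simp add: \<delta>\<^sub>0_def \<delta>_def algebra_simps)
    ultimately show "\<exists>Y\<in>E. frob d n (\<lambda>is. X is - Y is) \<le> (real d + 1) * \<eta>"
      unfolding E_def by force
  qed
qed

text \<open>Moving each point of an external (t/2)-net to a point of S within distance t/2 gives an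
  internal t-net, as the covering number requires.\<close>
lemma covnum_le_card_external_net:
  assumes "finite E" and cover: "\<And>X. X \<in> S \<Longrightarrow> \<exists>Y\<in>E. frob d n (\<lambda>is. X is - Y is) \<le> t / 2"
  shows "covnum d n S t \<le> ereal (real (card E))"
proof -
  define E' where "E' = {Y\<in>E. \<exists>X\<in>S. frob d n (\<lambda>is. X is - Y is) \<le> t / 2}"
  have "\<forall>Y\<in>E'. \<exists>X. X \<in> S \<and> frob d n (\<lambda>is. X is - Y is) \<le> t / 2"
    by (auto simp: E'_def)
  then obtain pick where pick: "\<And>Y. Y \<in> E' \<Longrightarrow> pick Y \<in> S \<and> frob d n (\<lambda>is. pick Y is - Y is) \<le> t / 2"
    by metis
  have "finite E'" "E' \<subseteq> E"
    using assms(1) by (auto simp: E'_def)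
  have "\<exists>Z\<in>pick ` E'. frob d n (\<lambda>is. X is - Z is) \<le> t" if X: "X \<in> S" for X
  proof -
    obtain Y where Y: "Y \<in> E" "frob d n (\<lambda>is. X is - Y is) \<le> t / 2"
      using cover[OF X] by blast
    then have "Y \<in> E'"
      using X by (auto simp: E'_def)
    have "frob d n (\<lambda>is. X is - pick Y is) \<le> frob d n (\<lambda>is. X is - Y is) + frob d n (\<lambda>is. pick Y is - Y is)"
      using frob_triangle[of d n X "pick Y" Y] by (simp add: frob_diff_commute[of d n Y])
    also have "\<dots> \<le> t"
      using Y(2) pick[OF \<open>Y \<in> E'\<close>] by linarith
    finally show ?thesis
      using \<open>Y \<in> E'\<close> by blast
  qed
  moreover have "pick ` E' \<subseteq> S"
    using pick by blast
  ultimately have "covnum d n S t \<le> ereal (real (card (pick ` E')))"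
    unfolding covnum_def using \<open>finite E'\<close> by (intro INF_lower) auto
  also have "card (pick ` E') \<le> card E"
    using card_image_le[OF \<open>finite E'\<close>, of pick] card_mono[OF assms(1) \<open>E' \<subseteq> E\<close>] by linarith
  finally show ?thesis
    by simp
qed

theorem lemma2:
  fixes d n r :: nat and \<theta> \<epsilon> \<mu> R :: real
  assumes "d \<ge> 1" "n \<ge> 1" "r \<ge> 1" "\<theta> \<ge> 0" "0 < \<epsilon>" "\<epsilon> < 1" "0 < \<mu>" "\<mu> < 1" "R \<ge> 1"
  shows "covnum d n (Bset d n r R \<mu> \<theta>) \<epsilon> \<le> ereal (
           (6 * (real d + 1) / \<epsilon>) ^ (r ^ d + r * n * d)
         * (R\<^sup>2 + \<mu> * real r) powr (real (r ^ d * d) / 2)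
         * (R\<^sup>2 + \<mu> * real (r ^ d)) powr (real (d * n * r) / 2)
         * R ^ ((d - 1) * d * n * r))"
proof -
  define \<eta> where "\<eta> = \<epsilon> / (2 * (real d + 1))"
  define L where "L = sqrt (R\<^sup>2 + \<mu> * (real r - 1))"
  have "R > 0"
    using assms(9) by simp
  have "\<eta> > 0" and half: "(real d + 1) * \<eta> = \<epsilon> / 2"
    using assms(5) by (simp_all add: \<eta>_def field_simps)
  obtain E where E: "finite E"
    "real (card E) \<le> (1 + 2 * L ^ d / \<eta>) ^ (r ^ d) * (1 + 2 * (R * L ^ (d - 1)) / \<eta>) ^ (r * n * d)"
    "\<And>X. X \<in> Bset d n r R \<mu> \<theta> \<Longrightarrow> \<exists>Y\<in>E. frob d n (\<lambda>is. X is - Y is) \<le> (real d + 1) * \<eta>"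
    unfolding L_def using assms(3) less_imp_le[OF assms(7)] \<open>R > 0\<close> \<open>\<eta> > 0\<close>
    by (rule tucker_external_net) blast
  have "covnum d n (Bset d n r R \<mu> \<theta>) \<epsilon> \<le> ereal (real (card E))"
    using E(1) E(3)[unfolded half] by (rule covnum_le_card_external_net)
  also have "\<dots> \<le> ereal ((6 * (real d + 1) / \<epsilon>) ^ (r ^ d + r * n * d)
         * (R\<^sup>2 + \<mu> * real r) powr (real (r ^ d * d) / 2)
         * (R\<^sup>2 + \<mu> * real (r ^ d)) powr (real (d * n * r) / 2)
         * R ^ ((d - 1) * d * n * r))"
    using order.trans[OF E(2)[unfolded L_def \<eta>_def] covering_bound_arith[OF assms(3,5)
        less_imp_le[OF assms(6)] less_imp_le[OF assms(7)] less_imp_le[OF assms(8)] assms(9)]]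
    by simp
  finally show ?thesis .
qed

end
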